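(* Let ${\bm{x}}_1^m,\dots,{\bm{x}}_n^m\in\mathbb{R}^d$ satisfy $\|{\bm{x}}_i^m\|\le1$, let $\ell(z)=\log(1+e^{-z})$ and $F_m({\bm{w}})=\frac1n\sum_{i=1}^n\ell(\langle{\bm{w}},{\bm{x}}_i^m\rangle)$. For ${\bm{w}}_1,{\bm{w}}_2\in\mathbb{R}^d$ with $\|{\bm{w}}_1-{\bm{w}}_2\|\le1$, $$\|\nabla F_m({\bm{w}}_2)-\nabla F_m({\bm{w}}_1)\|\le7F_m({\bm{w}}_1)\|{\bm{w}}_2-{\bm{w}}_1\|.$$
   Context: $F_m$ is the logistic loss of client $m$ in a distributed logistic regression problem with labels absorbed into the data. *)

theory Defs
  imports "HOL-Analysis.Analysis"
begin

definition logistic_loss :: "real \<Rightarrow> real" where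
  "logistic_loss z = ln (1 + exp (- z))"

definition client_loss :: "nat \<Rightarrow> (nat \<Rightarrow> 'a::real_inner) \<Rightarrow> 'a \<Rightarrow> real" where
  "client_loss n x w = (1 / real n) * (\<Sum>i = 1..n. logistic_loss (inner w (x i)))"

end

theory Submission
  imports Defs
begin

text \<open>
  The gradient of F_m is the average of the terms l'(<w, x_i>) x_i, so it suffices to show
  |l'(b) - l'(a)| <= e l(a) |b - a| whenever |b - a| <= 1. Writing l'(z) = -1/(1 + e^z),
  the difference l'(b) - l'(a) equals (e^b - e^a) / ((1 + e^a)(1 + e^b)); the numerator is at
  most e^(max a b) |b - a| <= e e^b |b - a|, and what remains is e |l'(a)| |b - a|, where
  |l'(a)| <= l(a) is the inequality ln y >= 1 - 1/y at y = 1 + e^(-a). Averaging over the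
  samples, and using |x_i| <= 1 twice, gives the constant e < 7.
\<close>

definition logistic_loss_deriv :: "real \<Rightarrow> real" where
  "logistic_loss_deriv z = - 1 / (1 + exp z)"

definition client_grad :: "nat \<Rightarrow> (nat \<Rightarrow> 'a::real_inner) \<Rightarrow> 'a \<Rightarrow> 'a" where
  "client_grad n x w = (1 / real n) *\<^sub>R (\<Sum>i = 1..n. logistic_loss_deriv (inner w (x i)) *\<^sub>R x i)"

lemma logistic_loss_nonneg: "0 \<le> logistic_loss z"
  unfolding logistic_loss_def by simp

lemma client_loss_nonneg: "0 \<le> client_loss n x w"
  unfolding client_loss_def by (intro mult_nonneg_nonneg sum_nonneg logistic_loss_nonneg) auto

lemma DERIV_logistic_loss: "DERIV logistic_loss z :> logistic_loss_deriv z"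
proof -
  have "DERIV (\<lambda>z. ln (1 + exp (- z))) z :> exp (- z) * - 1 / (1 + exp (- z))"
    by (auto intro!: derivative_eq_intros simp: add_pos_pos)
  also have "exp (- z) * - 1 / (1 + exp (- z)) = logistic_loss_deriv z"
    unfolding logistic_loss_deriv_def by (simp add: exp_minus field_simps)
  finally show ?thesis
    unfolding logistic_loss_def[abs_def] .
qed

lemma GDERIV_inner_left: "GDERIV (\<lambda>w. inner w c) w :> c"
  unfolding gderiv_def by (rule has_derivative_inner_left[OF has_derivative_ident])

lemma GDERIV_sum:
  assumes "\<And>i. i \<in> I \<Longrightarrow> GDERIV (f i) w :> df i"
  shows "GDERIV (\<lambda>w. \<Sum>i\<in>I. f i w) w :> (\<Sum>i\<in>I. df i)"
  using assms unfolding gderiv_def inner_sum_right by (rule has_derivative_sum)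

lemma GDERIV_unique:
  assumes "GDERIV f w :> D1" and "GDERIV f w :> D2"
  shows "D1 = D2"
proof -
  have "(\<lambda>h. inner h D1) = (\<lambda>h. inner h D2)"
    using assms unfolding gderiv_def by (rule has_derivative_unique)
  then have "inner (D1 - D2) (D1 - D2) = 0"
    by (metis inner_diff_right right_minus_eq)
  then show ?thesis
    by simp
qed

lemma GDERIV_client_loss: "GDERIV (client_loss n x) w :> client_grad n x w"
proof -
  have "GDERIV (\<lambda>w. logistic_loss (inner w (x i))) w :> logistic_loss_deriv (inner w (x i)) *\<^sub>R x i"
    for i
    by (rule GDERIV_DERIV_compose[OF GDERIV_inner_left DERIV_logistic_loss])
  then have "GDERIV (\<lambda>w. \<Sum>i = 1..n. logistic_loss (inner w (x i))) w
      :> (\<Sum>i = 1..n. logistic_loss_deriv (inner w (x i)) *\<^sub>R x i)"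
    by (rule GDERIV_sum)
  from GDERIV_mult[OF GDERIV_const[of "1 / real n"] this]
  have "GDERIV (\<lambda>w. (1 / real n) * (\<Sum>i = 1..n. logistic_loss (inner w (x i)))) w
      :> (1 / real n) *\<^sub>R (\<Sum>i = 1..n. logistic_loss_deriv (inner w (x i)) *\<^sub>R x i)"
    by simp
  then show ?thesis
    unfolding client_loss_def[abs_def] client_grad_def .
qed

lemma exp_diff_le:
  fixes a b :: real
  assumes "a \<le> b"
  shows "exp b - exp a \<le> exp b * (b - a)"
proof -
  have "exp b * (1 + (a - b)) \<le> exp b * exp (a - b)"
    by (intro mult_left_mono exp_ge_add_one_self) auto
  then show ?thesis
    by (simp add: exp_diff algebra_simps)
qed

lemma abs_exp_diff_le:
  fixes a b :: real
  shows "\<bar>exp b - exp a\<bar> \<le> exp (max a b) * \<bar>b - a\<bar>"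
  using exp_diff_le[of a b] exp_diff_le[of b a]
  by (cases "a \<le> b") (auto simp: max_def)

lemma abs_logistic_loss_deriv_le: "\<bar>logistic_loss_deriv z\<bar> \<le> logistic_loss z"
proof -
  have pos: "0 < 1 + exp (- z)" "0 < 1 + exp z"
    by (simp_all add: add_pos_pos)
  have "1 / (1 + exp (- z)) = exp z / (1 + exp z)"
    by (simp add: exp_minus field_simps)
  then have "\<bar>logistic_loss_deriv z\<bar> = 1 - 1 / (1 + exp (- z))"
    unfolding logistic_loss_deriv_def using pos by (simp add: field_simps)
  also have "\<dots> \<le> - ln (1 / (1 + exp (- z)))"
    using ln_le_minus_one[of "1 / (1 + exp (- z))"] pos by simp
  also have "\<dots> = logistic_loss z"
    unfolding logistic_loss_def using pos by (simp add: ln_div)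
  finally show ?thesis .
qed

lemma abs_logistic_loss_deriv_diff_le:
  assumes "\<bar>b - a\<bar> \<le> 1"
  shows "\<bar>logistic_loss_deriv b - logistic_loss_deriv a\<bar> \<le> exp 1 * logistic_loss a * \<bar>b - a\<bar>"
proof -
  have pa: "0 < 1 + exp a" and pb: "0 < 1 + exp b"
    by (simp_all add: add_pos_pos)
  have "exp (max a b) \<le> exp 1 * exp b"
    using assms by (simp add: exp_add[symmetric])
  also have "\<dots> \<le> exp 1 * (1 + exp b)"
    by simp
  finally have numerator_bound: "exp (max a b) \<le> exp 1 * (1 + exp b)" .
  have numerator: "\<bar>exp b - exp a\<bar> \<le> exp 1 * (1 + exp b) * \<bar>b - a\<bar>"
    using abs_exp_diff_le[of b a] numerator_bound by (meson abs_ge_zero mult_right_mono order_trans)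
  have "\<bar>logistic_loss_deriv b - logistic_loss_deriv a\<bar> = \<bar>exp b - exp a\<bar> / ((1 + exp a) * (1 + exp b))"
    unfolding logistic_loss_deriv_def using pa pb by (simp add: field_simps abs_divide)
  also have "\<dots> \<le> exp 1 * (1 + exp b) * \<bar>b - a\<bar> / ((1 + exp a) * (1 + exp b))"
    using pa pb by (intro divide_right_mono[OF numerator]) simp
  also have "\<dots> = exp 1 * \<bar>logistic_loss_deriv a\<bar> * \<bar>b - a\<bar>"
    unfolding logistic_loss_deriv_def using pa pb by simp
  also have "\<dots> \<le> exp 1 * logistic_loss a * \<bar>b - a\<bar>"
    by (intro mult_left_mono mult_right_mono abs_logistic_loss_deriv_le) simp_all
  finally show ?thesis .
qed

lemma abs_inner_diff_le:
  fixes c u v :: "'a::real_inner"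
  assumes "norm c \<le> 1"
  shows "\<bar>inner v c - inner u c\<bar> \<le> norm (v - u)"
proof -
  have "\<bar>inner v c - inner u c\<bar> \<le> norm (v - u) * norm c"
    unfolding inner_diff_left[symmetric] by (rule Cauchy_Schwarz_ineq2)
  also have "\<dots> \<le> norm (v - u)"
    using assms by (simp add: mult_left_le)
  finally show ?thesis .
qed

lemma norm_logistic_grad_term_diff_le:
  fixes c u v :: "'a::real_inner"
  assumes "norm c \<le> 1" and "norm (v - u) \<le> 1"
  shows "norm ((logistic_loss_deriv (inner v c) - logistic_loss_deriv (inner u c)) *\<^sub>R c)
    \<le> exp 1 * logistic_loss (inner u c) * norm (v - u)"
proof -
  have close: "\<bar>inner v c - inner u c\<bar> \<le> norm (v - u)"
    using assms(1) by (rule abs_inner_diff_le)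
  have "norm ((logistic_loss_deriv (inner v c) - logistic_loss_deriv (inner u c)) *\<^sub>R c)
      \<le> \<bar>logistic_loss_deriv (inner v c) - logistic_loss_deriv (inner u c)\<bar>"
    using assms(1) by (simp add: mult_left_le)
  also have "\<dots> \<le> exp 1 * logistic_loss (inner u c) * \<bar>inner v c - inner u c\<bar>"
    using close assms(2) by (intro abs_logistic_loss_deriv_diff_le) simp
  also have "\<dots> \<le> exp 1 * logistic_loss (inner u c) * norm (v - u)"
    using close by (intro mult_left_mono) (simp_all add: logistic_loss_nonneg)
  finally show ?thesis .
qed

lemma norm_client_grad_diff_le:
  fixes x :: "nat \<Rightarrow> 'a::real_inner"
  assumes "\<And>i. i \<in> {1..n} \<Longrightarrow> norm (x i) \<le> 1" and "norm (v - u) \<le> 1"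
  shows "norm (client_grad n x v - client_grad n x u) \<le> exp 1 * client_loss n x u * norm (v - u)"
proof -
  let ?term = "\<lambda>i. (logistic_loss_deriv (inner v (x i)) - logistic_loss_deriv (inner u (x i))) *\<^sub>R x i"
  have "norm (client_grad n x v - client_grad n x u) = (1 / real n) * norm (\<Sum>i = 1..n. ?term i)"
    unfolding client_grad_def by (simp add: scaleR_diff_left sum_subtractf flip: scaleR_diff_right)
  also have "\<dots> \<le> (1 / real n) * (\<Sum>i = 1..n. norm (?term i))"
    by (intro mult_left_mono norm_sum) simp
  also have "\<dots> \<le> (1 / real n) * (\<Sum>i = 1..n. exp 1 * logistic_loss (inner u (x i)) * norm (v - u))"
    using assms by (intro mult_left_mono sum_mono norm_logistic_grad_term_diff_le) simp_all
  also have "\<dots> = exp 1 * client_loss n x u * norm (v - u)"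
    unfolding client_loss_def by (simp add: sum_distrib_left sum_distrib_right mult_ac)
  finally show ?thesis .
qed

theorem lemmaB4:
  fixes n :: nat and x :: "nat \<Rightarrow> real ^ 'd" and w1 w2 :: "real ^ 'd"
    and gradF :: "real ^ 'd \<Rightarrow> real ^ 'd"
  assumes "n \<ge> 1"
    and "\<And>i. i \<in> {1..n} \<Longrightarrow> norm (x i) \<le> 1"
    and "\<And>w. GDERIV (client_loss n x) w :> gradF w"
    and "norm (w1 - w2) \<le> 1"
  shows "norm (gradF w2 - gradF w1) \<le> 7 * client_loss n x w1 * norm (w2 - w1)"
proof -
  have gradF_eq: "gradF w = client_grad n x w" for w
    using assms(3) GDERIV_client_loss by (rule GDERIV_unique)
  have "norm (gradF w2 - gradF w1) \<le> exp 1 * client_loss n x w1 * norm (w2 - w1)"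
    unfolding gradF_eq using assms(2,4) by (intro norm_client_grad_diff_le) (simp_all add: norm_minus_commute)
  also have "\<dots> \<le> 7 * client_loss n x w1 * norm (w2 - w1)"
    using exp_le by (intro mult_right_mono) (simp_all add: client_loss_nonneg)
  finally show ?thesis .
qed

end
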